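(* Let $n\ge 2$, $p\ge 2$, $\kappa\in\{0,1\}$ and $f^0,f^1\in\mathbb{R}^n$ with $f^0,f^1\ge 0$ and $\|f^0\|_1=\|f^1\|_1$. Consider the problem $$\min_{m\in\mathbb{R}^{(n-\kappa)p},\ f\in\mathbb{R}^{n(p-1)}} \|J(S_M m,\ S_F f+f_b^{+})\|_1 \quad\text{subject to}\quad D_M m+D_F f=f_b^{-}$$ (with $S_M,D_M,S_F,D_F,f_b^{\pm},J$ as in the context). If $(m_1,f_1)$ and $(m_2,f_2)$ are two minimizers, then $$\frac{(S_M m_1)_i}{(S_F f_1+f_b^{+})_i}=\frac{(S_M m_2)_i}{(S_F f_2+f_b^{+})_i}$$ for every index $i$ at which both denominators $(S_F f_1+f_b^{+})_i$ and $(S_F f_2+f_b^{+})_i$ are positive.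
   Context: Vectors $f\in\mathbb{R}^{n(p-1)}$, $m\in\mathbb{R}^{(n-\kappa)p}$ are discrete density and momentum reordered columnwise (time index outer); $\kappa=1$ is the Neumann and $\kappa=0$ the periodic spatial boundary case. $\otimes$ is the Kronecker product. Matrices: $S_p\in\mathbb{R}^{p-1,p}$ has $j$-th row $\tfrac12(e_j+e_{j+1})^{T}$; $D_p\in\mathbb{R}^{p-1,p}$ has $j$-th row $p(-e_j+e_{j+1})^{T}$. $S_n,D_n\in\mathbb{R}^{n-1,n}$ have $j$-th rows $\tfrac12(e_j+e_{j+1})^{T}$ and $n(-e_j+e_{j+1})^{T}$. $S_{n,per}\in\mathbb{R}^{n,n}$ has first row $\tfrac12(e_1+e_n)^T$ and $j$-th row $\tfrac12(e_{j-1}+e_j)^T$ ($j\ge2$); $D_{n,per}\in\mathbb{R}^{n,n}$ has first row $n(-e_1+e_n)^T$ and $j$-th row $n(e_{j-1}-e_j)^T$ ($j\ge 2$). $S_F:=S_p^{T}\otimes I_n$, $D_F:=-D_p^{T}\otimes I_n$; $S_M:=I_p\otimes S_n^{T}$, $D_M:=I_p\otimes(-D_n^{T})$ if $\kappa=1$, and $S_M:=I_p\otimes S_{n,per}^{T}$, $D_M:=I_p\otimes D_{n,per}^{T}$ if $\kappa=0$. $f_b^{+}:=\tfrac12((f^0)^T,0_{n(p-2)}^T,(f^1)^T)^T$, $f_b^{-}:=p((f^0)^T,0_{n(p-2)}^T,-(f^1)^T)^T$, both in $\mathbb{R}^{np}$. $J$ acts componentwise: $J(u,v)_i=u_i^2/(2v_i)$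 if $v_i>0$, $0$ if $(u_i,v_i)=(0,0)$, $+\infty$ otherwise, and $\|J(u,v)\|_1=\sum_i J(u,v)_i$. *)

theory Defs
  imports Complex_Main "HOL-Library.Extended_Real"
begin

text \<open>Matrices are functions nat => nat => real (0-based indices); dimensions are
  carried explicitly. Vectors are functions nat => real (0-based).\<close>

definition mtr :: "(nat \<Rightarrow> nat \<Rightarrow> real) \<Rightarrow> nat \<Rightarrow> nat \<Rightarrow> real" where
  "mtr A = (\<lambda>i j. A j i)"

definition idm :: "nat \<Rightarrow> nat \<Rightarrow> real" where
  "idm = (\<lambda>i j. if i = j then 1 else 0)"

text \<open>Kronecker product A (x) B, where B has r rows and c columns.\<close>
definition kron :: "(nat \<Rightarrow> nat \<Rightarrow> real) \<Rightarrow> nat \<Rightarrow> nat \<Rightarrow> (nat \<Rightarrow> nat \<Rightarrow> real) \<Rightarrow> nat \<Rightarrow> nat \<Rightarrow> real" where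
  "kron A r c B = (\<lambda>i j. A (i div r) (j div c) * B (i mod r) (j mod c))"

definition mvec :: "(nat \<Rightarrow> nat \<Rightarrow> real) \<Rightarrow> nat \<Rightarrow> (nat \<Rightarrow> real) \<Rightarrow> nat \<Rightarrow> real" where
  "mvec A c v = (\<lambda>i. \<Sum>j<c. A i j * v j)"

text \<open>S_p, D_p in R^{(p-1) x p}; S_n, D_n in R^{(n-1) x n} (row j: e_j, e_{j+1}, 0-based).\<close>
definition Savg :: "nat \<Rightarrow> nat \<Rightarrow> real" where
  "Savg = (\<lambda>j k. if k = j \<or> k = j + 1 then 1/2 else 0)"

definition Ddiff :: "nat \<Rightarrow> nat \<Rightarrow> nat \<Rightarrow> real" where
  "Ddiff q = (\<lambda>j k. if k = j then - real q else if k = j + 1 then real q else 0)"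

definition Sper :: "nat \<Rightarrow> nat \<Rightarrow> nat \<Rightarrow> real" where
  "Sper n = (\<lambda>j k. if j = 0 then (if k = 0 \<or> k = n - 1 then 1/2 else 0)
                    else (if k = j - 1 \<or> k = j then 1/2 else 0))"

definition Dper :: "nat \<Rightarrow> nat \<Rightarrow> nat \<Rightarrow> real" where
  "Dper n = (\<lambda>j k. if j = 0 then (if k = 0 then - real n else if k = n - 1 then real n else 0)
                    else (if k = j - 1 then real n else if k = j then - real n else 0))"

definition SF :: "nat \<Rightarrow> nat \<Rightarrow> nat \<Rightarrow> nat \<Rightarrow> real" where
  "SF n p = kron (mtr Savg) n n idm"

definition DF :: "nat \<Rightarrow> nat \<Rightarrow> nat \<Rightarrow> nat \<Rightarrow> real" where
  "DF n p = (\<lambda>i j. - kron (mtr (Ddiff p)) n n idm i j)"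

definition SM :: "nat \<Rightarrow> nat \<Rightarrow> nat \<Rightarrow> nat \<Rightarrow> nat \<Rightarrow> real" where
  "SM \<kappa> n p = (if \<kappa> = 1 then kron idm n (n - 1) (mtr Savg)
                else kron idm n n (mtr (Sper n)))"

definition DM :: "nat \<Rightarrow> nat \<Rightarrow> nat \<Rightarrow> nat \<Rightarrow> nat \<Rightarrow> real" where
  "DM \<kappa> n p = (if \<kappa> = 1 then kron idm n (n - 1) (\<lambda>i j. - mtr (Ddiff n) i j)
                else kron idm n n (mtr (Dper n)))"

definition fbp :: "nat \<Rightarrow> nat \<Rightarrow> (nat \<Rightarrow> real) \<Rightarrow> (nat \<Rightarrow> real) \<Rightarrow> nat \<Rightarrow> real" where
  "fbp n p f0 f1 = (\<lambda>i. if i < n then f0 i / 2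
                      else if n * (p - 1) \<le> i \<and> i < n * p then f1 (i - n * (p - 1)) / 2
                      else 0)"

definition fbm :: "nat \<Rightarrow> nat \<Rightarrow> (nat \<Rightarrow> real) \<Rightarrow> (nat \<Rightarrow> real) \<Rightarrow> nat \<Rightarrow> real" where
  "fbm n p f0 f1 = (\<lambda>i. if i < n then real p * f0 i
                      else if n * (p - 1) \<le> i \<and> i < n * p then - real p * f1 (i - n * (p - 1))
                      else 0)"

definition Jc :: "real \<Rightarrow> real \<Rightarrow> ereal" where
  "Jc u v = (if v > 0 then ereal (u^2 / (2 * v)) else if u = 0 \<and> v = 0 then 0 else \<infinity>)"

definition objective :: "nat \<Rightarrow> nat \<Rightarrow> nat \<Rightarrow> (nat \<Rightarrow> real) \<Rightarrow> (nat \<Rightarrow> real)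
    \<Rightarrow> (nat \<Rightarrow> real) \<Rightarrow> (nat \<Rightarrow> real) \<Rightarrow> ereal" where
  "objective \<kappa> n p f0 f1 m f =
     (\<Sum>i<n * p. Jc (mvec (SM \<kappa> n p) ((n - \<kappa>) * p) m i)
                    (mvec (SF n p) (n * (p - 1)) f i + fbp n p f0 f1 i))"

definition feasible :: "nat \<Rightarrow> nat \<Rightarrow> nat \<Rightarrow> (nat \<Rightarrow> real) \<Rightarrow> (nat \<Rightarrow> real)
    \<Rightarrow> (nat \<Rightarrow> real) \<Rightarrow> (nat \<Rightarrow> real) \<Rightarrow> bool" where
  "feasible \<kappa> n p f0 f1 m f \<longleftrightarrow>
     (\<forall>i<n * p. mvec (DM \<kappa> n p) ((n - \<kappa>) * p) m i + mvec (DF n p) (n * (p - 1)) f i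
                = fbm n p f0 f1 i)"

definition is_minimizer :: "nat \<Rightarrow> nat \<Rightarrow> nat \<Rightarrow> (nat \<Rightarrow> real) \<Rightarrow> (nat \<Rightarrow> real)
    \<Rightarrow> (nat \<Rightarrow> real) \<Rightarrow> (nat \<Rightarrow> real) \<Rightarrow> bool" where
  "is_minimizer \<kappa> n p f0 f1 m f \<longleftrightarrow>
     feasible \<kappa> n p f0 f1 m f \<and>
     (\<forall>m' f'. feasible \<kappa> n p f0 f1 m' f' \<longrightarrow> objective \<kappa> n p f0 f1 m f \<le> objective \<kappa> n p f0 f1 m' f')"

end

theory Submission
  imports Defs
begin

text \<open>The kinetic energy \<open>J\<close> is jointly convex, and for positive densities the identity
  \<open>u\<^sub>1\<^sup>2/v\<^sub>1 + u\<^sub>2\<^sup>2/v\<^sub>2 - (u\<^sub>1 + u\<^sub>2)\<^sup>2/(v\<^sub>1 + v\<^sub>2) = (u\<^sub>1 v\<^sub>2 - u\<^sub>2 v\<^sub>1)\<^sup>2/(v\<^sub>1 v\<^sub>2 (v\<^sub>1 + v\<^sub>2))\<close>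
  makes it strictly convex along every segment on which the velocity \<open>u/v\<close> changes. The
  constraint is linear, so the midpoint of two minimizers is feasible, and it would have strictly
  smaller energy if their velocities differed at an index where both densities are positive.

  This needs the minimal energy to be finite. A feasible point of finite energy has density
  constant in time, equal to the mean mass; in every time layer the momentum must then solve a
  spatial discrete divergence equation whose right-hand side has zero mean because \<open>f\<^sup>0\<close> and
  \<open>f\<^sup>1\<close> have equal mass, and the prefix sums of that right-hand side solve it, for the Neumann
  as well as for the periodic stencil.\<close>

section \<open>Strict convexity of the kinetic energy\<close>

definition J_dom :: "real \<Rightarrow> real \<Rightarrow> bool" where
  "J_dom u v \<longleftrightarrow> v > 0 \<or> (u = 0 \<and> v = 0)"

definition J_real :: "real \<Rightarrow> real \<Rightarrow> real" where
  "J_real u v = (if v > 0 then u\<^sup>2 / (2 * v) else 0)"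

lemma Jc_eq_J_real: "J_dom u v \<Longrightarrow> Jc u v = ereal (J_real u v)"
  by (auto simp: J_dom_def Jc_def J_real_def)

lemma Jc_finite_iff: "Jc u v \<noteq> \<infinity> \<longleftrightarrow> J_dom u v"
  by (auto simp: J_dom_def Jc_def)

lemma J_dom_midpoint: "J_dom u1 v1 \<Longrightarrow> J_dom u2 v2 \<Longrightarrow> J_dom ((u1 + u2) / 2) ((v1 + v2) / 2)"
  by (auto simp: J_dom_def)

lemma J_real_midpoint_gap:
  assumes "v1 > 0" "v2 > 0"
  shows "(J_real u1 v1 + J_real u2 v2) / 2 - J_real ((u1 + u2) / 2) ((v1 + v2) / 2)
           = (u1 * v2 - u2 * v1)\<^sup>2 / (4 * v1 * v2 * (v1 + v2))"
proof -
  have "v1 + v2 > 0" using assms by simp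
  then show ?thesis
    using assms by (simp add: J_real_def power_divide divide_simps) (simp add: algebra_simps power2_eq_square)
qed

lemma J_real_midpoint_le:
  assumes "J_dom u1 v1" "J_dom u2 v2"
  shows "J_real ((u1 + u2) / 2) ((v1 + v2) / 2) \<le> (J_real u1 v1 + J_real u2 v2) / 2"
proof (cases "v1 > 0 \<and> v2 > 0")
  case True
  then have "(u1 * v2 - u2 * v1)\<^sup>2 / (4 * v1 * v2 * (v1 + v2)) \<ge> 0" by simp
  then show ?thesis using J_real_midpoint_gap[of v1 v2 u1 u2] True by linarith
next
  case False
  then show ?thesis using assms by (auto simp: J_dom_def J_real_def power_divide)
qed

lemma J_real_midpoint_less:
  assumes "v1 > 0" "v2 > 0" "u1 / v1 \<noteq> u2 / v2"
  shows "J_real ((u1 + u2) / 2) ((v1 + v2) / 2) < (J_real u1 v1 + J_real u2 v2) / 2"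
proof -
  have "u1 * v2 - u2 * v1 \<noteq> 0" using assms by (auto simp: field_simps)
  then have "(u1 * v2 - u2 * v1)\<^sup>2 / (4 * v1 * v2 * (v1 + v2)) > 0" using assms(1,2) by simp
  then show ?thesis using J_real_midpoint_gap[OF assms(1,2), of u1 u2] by linarith
qed

lemma sum_Jc_midpoint_less_max:
  fixes U1 V1 U2 V2 :: "'i \<Rightarrow> real"
  assumes I: "finite I"
    and fin1: "(\<Sum>i\<in>I. Jc (U1 i) (V1 i)) \<noteq> \<infinity>" and fin2: "(\<Sum>i\<in>I. Jc (U2 i) (V2 i)) \<noteq> \<infinity>"
    and k: "k \<in> I" "V1 k > 0" "V2 k > 0" "U1 k / V1 k \<noteq> U2 k / V2 k"
  shows "(\<Sum>i\<in>I. Jc ((U1 i + U2 i) / 2) ((V1 i + V2 i) / 2))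
           < max (\<Sum>i\<in>I. Jc (U1 i) (V1 i)) (\<Sum>i\<in>I. Jc (U2 i) (V2 i))"
proof -
  have sum_Jc: "(\<Sum>i\<in>I. Jc (U i) (V i)) = ereal (\<Sum>i\<in>I. J_real (U i) (V i))"
    if "\<forall>i\<in>I. J_dom (U i) (V i)" for U V :: "'i \<Rightarrow> real"
    using that by (simp add: Jc_eq_J_real)
  have dom1: "\<forall>i\<in>I. J_dom (U1 i) (V1 i)" and dom2: "\<forall>i\<in>I. J_dom (U2 i) (V2 i)"
    using fin1 fin2 I by (auto simp: sum_Pinfty Jc_finite_iff)
  have "(\<Sum>i\<in>I. J_real ((U1 i + U2 i) / 2) ((V1 i + V2 i) / 2))
          < (\<Sum>i\<in>I. (J_real (U1 i) (V1 i) + J_real (U2 i) (V2 i)) / 2)"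
  proof (rule sum_strict_mono_ex1[OF I])
    show "\<forall>i\<in>I. J_real ((U1 i + U2 i) / 2) ((V1 i + V2 i) / 2) \<le> (J_real (U1 i) (V1 i) + J_real (U2 i) (V2 i)) / 2"
      using dom1 dom2 J_real_midpoint_le by blast
    show "\<exists>i\<in>I. J_real ((U1 i + U2 i) / 2) ((V1 i + V2 i) / 2) < (J_real (U1 i) (V1 i) + J_real (U2 i) (V2 i)) / 2"
      using k J_real_midpoint_less by blast
  qed
  also have "\<dots> = ((\<Sum>i\<in>I. J_real (U1 i) (V1 i)) + (\<Sum>i\<in>I. J_real (U2 i) (V2 i))) / 2"
    by (simp add: sum_divide_distrib[symmetric] sum.distrib)
  also have "\<dots> \<le> max (\<Sum>i\<in>I. J_real (U1 i) (V1 i)) (\<Sum>i\<in>I. J_real (U2 i) (V2 i))"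
    by simp
  finally show ?thesis
    using dom1 dom2 J_dom_midpoint by (simp add: sum_Jc max_def split: if_split_asm)
qed

lemma mvec_midpoint: "mvec A c (\<lambda>j. (v j + w j) / 2) i = (mvec A c v i + mvec A c w i) / 2"
  by (simp add: mvec_def sum_divide_distrib[symmetric] sum.distrib[symmetric] algebra_simps)

lemma feasible_midpoint:
  assumes "feasible \<kappa> n p f0 f1 m1 g1" "feasible \<kappa> n p f0 f1 m2 g2"
  shows "feasible \<kappa> n p f0 f1 (\<lambda>j. (m1 j + m2 j) / 2) (\<lambda>j. (g1 j + g2 j) / 2)"
  using assms unfolding feasible_def mvec_midpoint by (simp add: add_divide_distrib[symmetric] add_ac)

lemma objective_midpoint:
  "objective \<kappa> n p f0 f1 (\<lambda>j. (m1 j + m2 j) / 2) (\<lambda>j. (g1 j + g2 j) / 2) =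
     (\<Sum>i<n * p. Jc ((mvec (SM \<kappa> n p) ((n - \<kappa>) * p) m1 i + mvec (SM \<kappa> n p) ((n - \<kappa>) * p) m2 i) / 2)
                    (((mvec (SF n p) (n * (p - 1)) g1 i + fbp n p f0 f1 i)
                      + (mvec (SF n p) (n * (p - 1)) g2 i + fbp n p f0 f1 i)) / 2))"
  unfolding objective_def mvec_midpoint by (simp add: field_simps)

lemma minimizers_same_ratio:
  assumes finite_point: "feasible \<kappa> n p f0 f1 m0 g0" "objective \<kappa> n p f0 f1 m0 g0 \<noteq> \<infinity>"
    and min1: "is_minimizer \<kappa> n p f0 f1 m1 g1" and min2: "is_minimizer \<kappa> n p f0 f1 m2 g2"
    and i: "i < n * p"
    and pos1: "mvec (SF n p) (n * (p - 1)) g1 i + fbp n p f0 f1 i > 0"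
    and pos2: "mvec (SF n p) (n * (p - 1)) g2 i + fbp n p f0 f1 i > 0"
  shows "mvec (SM \<kappa> n p) ((n - \<kappa>) * p) m1 i / (mvec (SF n p) (n * (p - 1)) g1 i + fbp n p f0 f1 i)
       = mvec (SM \<kappa> n p) ((n - \<kappa>) * p) m2 i / (mvec (SF n p) (n * (p - 1)) g2 i + fbp n p f0 f1 i)"
proof (rule ccontr)
  let ?obj = "objective \<kappa> n p f0 f1"
  let ?m = "\<lambda>j. (m1 j + m2 j) / 2" and ?g = "\<lambda>j. (g1 j + g2 j) / 2"
  assume ne: "\<not> ?thesis"
  have feas: "feasible \<kappa> n p f0 f1 m1 g1" "feasible \<kappa> n p f0 f1 m2 g2"
    using min1 min2 by (auto simp: is_minimizer_def)
  have eq: "?obj m1 g1 = ?obj m2 g2"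
    using min1 min2 feas by (auto simp: is_minimizer_def intro: order_antisym)
  have fin: "?obj m1 g1 \<noteq> \<infinity>"
    using min1 finite_point by (auto simp: is_minimizer_def top.extremum_unique)
  have "?obj ?m ?g < max (?obj m1 g1) (?obj m2 g2)"
    unfolding objective_midpoint
    using fin eq i pos1 pos2 ne unfolding objective_def by (intro sum_Jc_midpoint_less_max) auto
  moreover have "?obj m1 g1 \<le> ?obj ?m ?g"
    using min1 feasible_midpoint[OF feas] by (auto simp: is_minimizer_def)
  ultimately show False using eq by simp
qed

section \<open>Matrix-vector products in layer coordinates\<close>

lemma sum_lessThan_mult:
  "(\<Sum>j<q * c. (g :: nat \<Rightarrow> 'a::comm_monoid_add) j) = (\<Sum>a<q. \<Sum>b<c. g (a * c + b))"
proof -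
  have "(\<Sum>j<q * c. g j) = (\<Sum>a<q. sum g {a * c..<a * c + c})"
    using sum.nat_group[of g c q] by simp
  also have "\<dots> = (\<Sum>a<q. \<Sum>b<c. g (a * c + b))"
  proof (rule sum.cong[OF refl])
    fix a
    show "sum g {a * c..<a * c + c} = (\<Sum>b<c. g (a * c + b))"
      using sum.shift_bounds_nat_ivl[of g 0 "a * c" c] by (simp add: atLeast0LessThan add.commute)
  qed
  finally show ?thesis .
qed

lemma mvec_kron:
  "mvec (kron A r c B) (q * c) v i = (\<Sum>a<q. \<Sum>b<c. A (i div r) a * B (i mod r) b * v (a * c + b))"
  unfolding mvec_def kron_def sum_lessThan_mult by simp

lemma sum_idm:
  assumes "k < N"
  shows "(\<Sum>a<N. idm k a * Y a) = Y k"
proof -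
  have "(\<Sum>a<N. idm k a * Y a) = (\<Sum>a<N. if k = a then Y a else 0)"
    by (intro sum.cong) (auto simp: idm_def)
  then show ?thesis using assms by simp
qed

lemma mvec_kron_idm_left:
  assumes "i div r < q"
  shows "mvec (kron idm r c B) (q * c) v i = (\<Sum>b<c. B (i mod r) b * v (i div r * c + b))"
proof -
  have "mvec (kron idm r c B) (q * c) v i = (\<Sum>a<q. idm (i div r) a * (\<Sum>b<c. B (i mod r) b * v (a * c + b)))"
    by (simp add: mvec_kron sum_distrib_left mult.assoc)
  then show ?thesis using sum_idm[OF assms] by simp
qed

lemma mvec_kron_idm_right:
  assumes "0 < r"
  shows "mvec (kron A r r idm) (q * r) v i = (\<Sum>a<q. A (i div r) a * v (a * r + i mod r))"
proof -
  have "mvec (kron A r r idm) (q * r) v i = (\<Sum>a<q. A (i div r) a * (\<Sum>b<r. idm (i mod r) b * v (a * r + b)))"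
    by (simp add: mvec_kron sum_distrib_left mult.assoc)
  then show ?thesis using sum_idm[of "i mod r" r] assms by simp
qed

lemma mvec_SF:
  "0 < n \<Longrightarrow> mvec (SF n p) (n * (p - 1)) v i = (\<Sum>a<p - 1. Savg a (i div n) * v (a * n + i mod n))"
  unfolding SF_def using mvec_kron_idm_right[of n "mtr Savg" "p - 1" v i]
  by (simp add: mult.commute mtr_def)

lemma mvec_DF:
  "0 < n \<Longrightarrow> mvec (DF n p) (n * (p - 1)) v i = - (\<Sum>a<p - 1. Ddiff p a (i div n) * v (a * n + i mod n))"
  unfolding DF_def using mvec_kron_idm_right[of n "mtr (Ddiff p)" "p - 1" v i]
  by (simp add: mvec_def sum_negf mult.commute mtr_def)

lemma mvec_DM_neumann:
  "i div n < p \<Longrightarrow> mvec (DM 1 n p) ((n - 1) * p) v i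
     = - (\<Sum>b<n - 1. Ddiff n b (i mod n) * v (i div n * (n - 1) + b))"
  unfolding DM_def using mvec_kron_idm_left[of i n p "n - 1" "\<lambda>i j. - mtr (Ddiff n) i j" v]
  by (simp add: mult.commute mtr_def sum_negf)

lemma mvec_DM_periodic:
  "i div n < p \<Longrightarrow> mvec (DM 0 n p) (n * p) v i = (\<Sum>b<n. Dper n b (i mod n) * v (i div n * n + b))"
  unfolding DM_def using mvec_kron_idm_left[of i n p n "mtr (Dper n)" v]
  by (simp add: mult.commute mtr_def)

lemma sum_bidiagonal:
  fixes N k :: nat and x y :: real
  shows "(\<Sum>a<N. ((if a = k then x else 0) + (if a + 1 = k then y else 0)) * Y a)
           = (if k < N then x * Y k else 0) + (if 1 \<le> k \<and> k \<le> N then y * Y (k - 1) else 0)"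
proof -
  have "(\<Sum>a<N. ((if a = k then x else 0) + (if a + 1 = k then y else 0)) * Y a)
          = (\<Sum>a<N. (if a = k then x * Y a else 0) + (if 1 \<le> k \<and> a = k - 1 then y * Y a else 0))"
  proof (rule sum.cong[OF refl])
    fix a
    show "((if a = k then x else 0) + (if a + 1 = k then y else 0)) * Y a
            = (if a = k then x * Y a else 0) + (if 1 \<le> k \<and> a = k - 1 then y * Y a else 0)"
      by (cases "a = k"; cases "a + 1 = k") auto
  qed
  then show ?thesis by (cases "1 \<le> k") (auto simp: sum.distrib)
qed

lemma sum_Savg:
  "(\<Sum>a<N. Savg a k * Y a) = (if k < N then Y k / 2 else 0) + (if 1 \<le> k \<and> k \<le> N then Y (k - 1) / 2 else 0)"
proof -
  have Savg_eq: "Savg a k = (if a = k then 1 / 2 else 0) + (if a + 1 = k then 1 / 2 else 0)" for a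
    by (auto simp: Savg_def)
  show ?thesis unfolding Savg_eq sum_bidiagonal by simp
qed

lemma sum_Ddiff:
  "(\<Sum>a<N. Ddiff q a k * Y a) = (if 1 \<le> k \<and> k \<le> N then q * Y (k - 1) else 0) - (if k < N then q * Y k else 0)"
proof -
  have Ddiff_eq: "Ddiff q a k = (if a = k then - real q else 0) + (if a + 1 = k then real q else 0)" for a
    by (auto simp: Ddiff_def)
  show ?thesis unfolding Ddiff_eq sum_bidiagonal by simp
qed

lemma sum_Dper:
  assumes "2 \<le> n" "s < n"
  shows "(\<Sum>b<n. Dper n b s * Y b) = n * Y ((s + 1) mod n) - n * Y s"
proof -
  have "Dper n b s * Y b = (if b = (s + 1) mod n then n * Y ((s + 1) mod n) else 0) - (if b = s then n * Y s else 0)"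
    if "b < n" for b
    using assms that by (cases "s + 1 < n") (auto simp: Dper_def)
  then have "(\<Sum>b<n. Dper n b s * Y b)
      = (\<Sum>b<n. (if b = (s + 1) mod n then n * Y ((s + 1) mod n) else 0) - (if b = s then n * Y s else 0))"
    by (intro sum.cong) auto
  then show ?thesis using assms by (simp add: sum_subtractf)
qed

section \<open>A feasible point of finite energy\<close>

lemma neumann_divergence_prefix_sums:
  fixes G :: "nat \<Rightarrow> real"
  assumes zero_mean: "(\<Sum>t<n. G t) = 0" and s: "s < n"
  shows "- (\<Sum>b<n - 1. Ddiff n b s * ((\<Sum>t<b + 1. G t) / n)) = G s"
proof -
  have "- (\<Sum>b<n - 1. Ddiff n b s * ((\<Sum>t<b + 1. G t) / n))
      = (if s < n - 1 then (\<Sum>t<s + 1. G t) else 0) - (if 1 \<le> s then (\<Sum>t<s. G t) else 0)"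
    unfolding sum_Ddiff using s by (auto simp del: sum.lessThan_Suc simp: Suc_diff_Suc)
  also have "\<dots> = G s"
  proof (cases "s < n - 1")
    case False
    then have "n = s + 1" using s by simp
    then show ?thesis using zero_mean by (cases s) auto
  qed (cases s; auto)
  finally show ?thesis .
qed

lemma periodic_divergence_prefix_sums:
  fixes G :: "nat \<Rightarrow> real"
  assumes n: "2 \<le> n" and zero_mean: "(\<Sum>t<n. G t) = 0" and s: "s < n"
  shows "(\<Sum>b<n. Dper n b s * ((\<Sum>t<b. G t) / n)) = G s"
proof -
  have "(\<Sum>b<n. Dper n b s * ((\<Sum>t<b. G t) / n)) = (\<Sum>t<(s + 1) mod n. G t) - (\<Sum>t<s. G t)"
    unfolding sum_Dper[OF n s] using n by simp
  also have "\<dots> = G s"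
  proof (cases "s + 1 < n")
    case False
    then have "n = s + 1" using s by simp
    then show ?thesis using zero_mean by simp
  qed simp
  finally show ?thesis .
qed

lemma layer_index:
  fixes n p i :: nat
  assumes "i < n * p"
  shows "i div n < p" and "i mod n < n" and "i < n \<longleftrightarrow> i div n = 0"
    and "n * (p - 1) \<le> i \<longleftrightarrow> i div n = p - 1"
    and "i div n = p - 1 \<Longrightarrow> i - n * (p - 1) = i mod n"
proof -
  have n: "0 < n" using assms by (cases n) auto
  show "i div n < p" using assms by (simp add: less_mult_imp_div_less mult.commute)
  moreover have "n * (p - 1) \<le> i \<longleftrightarrow> p - 1 \<le> i div n"
    using n by (simp add: less_eq_div_iff_mult_less_eq mult.commute)
  ultimately show "n * (p - 1) \<le> i \<longleftrightarrow> i div n = p - 1" by linarith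
  show "i mod n < n" "i < n \<longleftrightarrow> i div n = 0" using n by (auto simp: div_eq_0_iff)
  show "i - n * (p - 1) = i mod n" if "i div n = p - 1"
    using that div_mult_mod_eq[of i n] by (metis add_diff_cancel_left' mult.commute)
qed

lemma fbm_layer:
  assumes "i < n * p"
  shows "fbm n p f0 f1 i = (if i div n = 0 then p * f0 (i mod n)
                             else if i div n = p - 1 then - p * f1 (i mod n) else 0)"
  using layer_index[OF assms] assms by (auto simp: fbm_def)

lemma fbp_layer:
  assumes "i < n * p"
  shows "fbp n p f0 f1 i = (if i div n = 0 then f0 (i mod n) / 2
                             else if i div n = p - 1 then f1 (i mod n) / 2 else 0)"
  using layer_index[OF assms] assms by (auto simp: fbp_def)

lemma feasible_witness:
  fixes f0 f1 :: "nat \<Rightarrow> real"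
  assumes n: "2 \<le> n" and p: "2 \<le> p" and \<kappa>: "\<kappa> \<in> {0, 1}"
    and mass: "(\<Sum>s<n. f0 s) = (\<Sum>s<n. f1 s)"
  defines "u \<equiv> (\<Sum>s<n. f0 s) / n"
  defines "g \<equiv> \<lambda>K s. if K = 0 then p * (f0 s - u) else if K = p - 1 then p * (u - f1 s) else 0"
  defines "m \<equiv> \<lambda>j. (\<Sum>t<j mod (n - \<kappa>) + \<kappa>. g (j div (n - \<kappa>)) t) / n"
  shows "feasible \<kappa> n p f0 f1 m (\<lambda>_. u)"
  \<comment> \<open>with \<open>b = j mod (n - \<kappa>)\<close>, \<open>m\<close> sums \<open>g\<close> over \<open>t \<le> b\<close> for the Neumann stencil and over \<open>t < b\<close> for the periodic one\<close>
  unfolding feasible_def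
proof (intro allI impI)
  fix i assume i: "i < n * p"
  define K where "K = i div n"
  define s where "s = i mod n"
  have K: "K < p" and s: "s < n" using layer_index[OF i] by (simp_all add: K_def s_def)
  have "real n * u = (\<Sum>s<n. f0 s)" using n by (simp add: u_def)
  then have zero_mean: "(\<Sum>t<n. g K t) = 0"
    using mass by (cases "K = 0"; cases "K = p - 1") (simp_all add: g_def sum_subtractf flip: sum_distrib_left)
  have DM: "mvec (DM \<kappa> n p) ((n - \<kappa>) * p) m i = g K s"
  proof (cases "\<kappa> = 1")
    case True
    have "mvec (DM \<kappa> n p) ((n - \<kappa>) * p) m i = - (\<Sum>b<n - 1. Ddiff n b s * m (K * (n - 1) + b))"
      using mvec_DM_neumann[of i n p m] K True by (simp add: K_def s_def)
    also have "\<dots> = - (\<Sum>b<n - 1. Ddiff n b s * ((\<Sum>t<b + 1. g K t) / n))"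
      using True by (simp add: m_def)
    also have "\<dots> = g K s" by (rule neumann_divergence_prefix_sums[OF zero_mean s])
    finally show ?thesis .
  next
    case False
    then have "\<kappa> = 0" using \<kappa> by simp
    have "mvec (DM \<kappa> n p) ((n - \<kappa>) * p) m i = (\<Sum>b<n. Dper n b s * m (K * n + b))"
      using mvec_DM_periodic[of i n p m] K \<open>\<kappa> = 0\<close> by (simp add: K_def s_def)
    also have "\<dots> = (\<Sum>b<n. Dper n b s * ((\<Sum>t<b. g K t) / n))"
      using \<open>\<kappa> = 0\<close> by (simp add: m_def)
    also have "\<dots> = g K s" by (rule periodic_divergence_prefix_sums[OF n zero_mean s])
    finally show ?thesis .
  qed
  have DF: "mvec (DF n p) (n * (p - 1)) (\<lambda>_. u) i = (if K < p - 1 then p * u else 0) - (if 1 \<le> K then p * u else 0)"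
    using mvec_DF[of n p "\<lambda>_. u" i] n K by (simp add: sum_Ddiff K_def)
  show "mvec (DM \<kappa> n p) ((n - \<kappa>) * p) m i + mvec (DF n p) (n * (p - 1)) (\<lambda>_. u) i = fbm n p f0 f1 i"
    unfolding DM DF fbm_layer[OF i] K_def[symmetric] s_def[symmetric]
    using p K by (auto simp: g_def algebra_simps)
qed

lemma mvec_SF_const_pos:
  assumes i: "i < n * p" and p: "2 \<le> p" and u: "0 < u"
  shows "mvec (SF n p) (n * (p - 1)) (\<lambda>_. u) i > 0"
proof -
  have "0 < n" using i by (cases n) auto
  then show ?thesis using mvec_SF[of n p "\<lambda>_. u" i] layer_index(1)[OF i] p u by (auto simp: sum_Savg)
qed

lemma fbp_nonneg:
  assumes "i < n * p" "\<forall>s<n. f0 s \<ge> 0" "\<forall>s<n. f1 s \<ge> 0"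
  shows "fbp n p f0 f1 i \<ge> 0"
  using assms layer_index(2)[OF assms(1)] by (simp add: fbp_layer)

lemma objective_finite_iff:
  "objective \<kappa> n p f0 f1 m f \<noteq> \<infinity> \<longleftrightarrow>
     (\<forall>i<n * p. J_dom (mvec (SM \<kappa> n p) ((n - \<kappa>) * p) m i) (mvec (SF n p) (n * (p - 1)) f i + fbp n p f0 f1 i))"
  by (auto simp: objective_def sum_Pinfty Jc_finite_iff)

lemma exists_feasible_finite_objective:
  fixes f0 f1 :: "nat \<Rightarrow> real"
  assumes n: "2 \<le> n" and p: "2 \<le> p" and \<kappa>: "\<kappa> \<in> {0, 1}"
    and f0: "\<forall>s<n. f0 s \<ge> 0" and f1: "\<forall>s<n. f1 s \<ge> 0"
    and mass: "(\<Sum>s<n. \<bar>f0 s\<bar>) = (\<Sum>s<n. \<bar>f1 s\<bar>)"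
  shows "\<exists>m f. feasible \<kappa> n p f0 f1 m f \<and> objective \<kappa> n p f0 f1 m f \<noteq> \<infinity>"
proof -
  have mass': "(\<Sum>s<n. f0 s) = (\<Sum>s<n. f1 s)"
    using mass f0 f1 by (metis (no_types, lifting) abs_of_nonneg lessThan_iff sum.cong)
  show ?thesis
  proof (cases "(\<Sum>s<n. f0 s) > 0")
    case True
    define u where "u = (\<Sum>s<n. f0 s) / n"
    have u: "u > 0" using True n by (simp add: u_def)
    obtain m where "feasible \<kappa> n p f0 f1 m (\<lambda>_. u)"
      using feasible_witness[OF n p \<kappa> mass'] unfolding u_def by blast
    moreover have "objective \<kappa> n p f0 f1 m (\<lambda>_. u) \<noteq> \<infinity>"
      unfolding objective_finite_iff J_dom_def
      using mvec_SF_const_pos[OF _ p u] fbp_nonneg[OF _ f0 f1] by (simp add: add_pos_nonneg)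
    ultimately show ?thesis by blast
  next
    case False
    then have "(\<Sum>s<n. f0 s) = 0" using f0 sum_nonneg[of "{..<n}" f0] by force
    then have "\<forall>s<n. f0 s = 0" "\<forall>s<n. f1 s = 0"
      using f0 f1 mass' sum_nonneg_eq_0_iff[of "{..<n}" f0] sum_nonneg_eq_0_iff[of "{..<n}" f1] by auto
    then have "fbm n p f0 f1 i = 0" "fbp n p f0 f1 i = 0" if "i < n * p" for i
      using layer_index(2)[OF that] by (simp_all add: fbm_layer[OF that] fbp_layer[OF that])
    then have "feasible \<kappa> n p f0 f1 (\<lambda>_. 0) (\<lambda>_. 0) \<and> objective \<kappa> n p f0 f1 (\<lambda>_. 0) (\<lambda>_. 0) \<noteq> \<infinity>"
      by (simp add: feasible_def objective_finite_iff J_dom_def mvec_def)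
    then show ?thesis by blast
  qed
qed

theorem lemma1:
  fixes n p \<kappa> :: nat and f0 f1 m1 f1' m2 f2 :: "nat \<Rightarrow> real"
  assumes "n \<ge> 2" and "p \<ge> 2" and "\<kappa> \<in> {0, 1}"
    and "\<forall>i<n. f0 i \<ge> 0" and "\<forall>i<n. f1 i \<ge> 0"
    and "(\<Sum>i<n. \<bar>f0 i\<bar>) = (\<Sum>i<n. \<bar>f1 i\<bar>)"
    and "is_minimizer \<kappa> n p f0 f1 m1 f1'"
    and "is_minimizer \<kappa> n p f0 f1 m2 f2"
  shows "\<forall>i<n * p.
           mvec (SF n p) (n * (p - 1)) f1' i + fbp n p f0 f1 i > 0 \<and>
           mvec (SF n p) (n * (p - 1)) f2 i + fbp n p f0 f1 i > 0 \<longrightarrow>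
           mvec (SM \<kappa> n p) ((n - \<kappa>) * p) m1 i / (mvec (SF n p) (n * (p - 1)) f1' i + fbp n p f0 f1 i)
         = mvec (SM \<kappa> n p) ((n - \<kappa>) * p) m2 i / (mvec (SF n p) (n * (p - 1)) f2 i + fbp n p f0 f1 i)"
proof -
  obtain m0 g0 where "feasible \<kappa> n p f0 f1 m0 g0" "objective \<kappa> n p f0 f1 m0 g0 \<noteq> \<infinity>"
    using exists_feasible_finite_objective[OF assms(1-6)] by blast
  then show ?thesis using minimizers_same_ratio[OF _ _ assms(7,8)] by blast
qed

end
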